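(* Let $A$ and $B$ be irreducible $\{0,1\}$-matrices, neither of which is a permutation matrix. If the one-sided topological Markov shifts $(X_A,\sigma_A)$ and $(X_B,\sigma_B)$ are coded equivalent, then they are continuously orbit equivalent.
   Context: For an $N\times N$ matrix $A=[A(i,j)]_{i,j=1}^N$ with entries in $\{0,1\}$, put $\Sigma_A=\{1,\dots,N\}$ and let $X_A$ be the set of sequences $(x_n)_{n\in\mathbb{N}}$ in $\Sigma_A$ with $A(x_n,x_{n+1})=1$ for all $n$, with the product topology and the shift $\sigma_A((x_n)_n)=(x_{n+1})_n$; $(X_A,\sigma_A)$ is the one-sided topological Markov shift. $B_k(X_A)$ is the set of admissible words of length $k$ (words occurring in elements of $X_A$), $B_0(X_A)$ is the empty word, $B_*(X_A)=\bigcup_{k\ge0}B_k(X_A)$. For a word $w=w_1w_2\cdots w_\ell$ put $\sigma_A(w)=w_2\cdots w_\ell$. A code is a nonempty $\mathcal{C}\subset B_*(X_A)$ such that whenever $\omega(i_1)\cdots\omega(i_k)=\omega(j_1)\cdots\omega(j_n)$ with all $\omega(\cdot)\in\mathcal{C}$, then $n=k$ and $\omega(i_m)=\omega(j_m)$ for all $m$. A prefix code is a code in which no word is a beginning (prefix) of another. A finite prefix code $\mathcal{C}=\{\omega(1),\dots,\omega(M)\}\subset B_*(X_A)$, with $\Sigma_{A(\mathcal{C})}=\{1,\dots,M\}$, is a right Markov code for $(X_A,\sigma_A)$ if: (i) for every $\gamma\in B_*(X_A)$ there is $\eta\in B_*(X_A)$ with $\gamma\eta\in B_*(X_A)$ and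 a unique finite sequence $(i_1,\dots,i_k)$ in $\Sigma_{A(\mathcal{C})}$ with $\gamma\eta=\omega(i_1)\cdots\omega(i_k)$; (ii) there is $L\in\mathbb{N}$ such that for all $i_1,\dots,i_L\in\Sigma_{A(\mathcal{C})}$ with $\omega(i_1)\cdots\omega(i_L)\in B_*(X_A)$ there exist $j_1,\dots,j_k\in\Sigma_{A(\mathcal{C})}$ (with $k$ depending on $(i_1,\dots,i_L)$) such that $\sigma_A(\omega(i_1))\omega(i_2)\cdots\omega(i_L)=\omega(j_1)\cdots\omega(j_k)$; (iii) for every $i,j\in\Sigma_{A(\mathcal{C})}$ there are $n_1,\dots,n_l\in\Sigma_{A(\mathcal{C})}$ with $\omega(i)\omega(n_1)\cdots\omega(n_l)\omega(j)\in B_*(X_A)$. Given a right Markov code $\mathcal{C}$, define the $M\times M$ matrix $A(\mathcal{C})(i,j)=A(r(\omega(i)),s(\omega(j)))$ where $s(\omega(i))$ and $r(\omega(i))$ are the first and last symbols of $\omega(i)$. Two shifts $(X_A,\sigma_A),(X_B,\sigma_B)$ are topologically conjugate if there is a homeomorphism $h:X_A\to X_B$ with $h\circ\sigma_A=\sigma_B\circ h$. For irreducible non-permutation $A,B$, $(X_A,\sigma_A)$ and $(X_B,\sigma_B)$ are elementary coded equivalent if there exist a right Markov code $\mathcal{C}_1$ for $(X_A,\sigma_A)$ and a right Markov code $\mathcal{C}_2$ for $(X_B,\sigma_B)$ such that $(X_{A(\mathcal{C}_1)},\sigma_{A(\mathcal{C}_1)})$ and $(X_{B(\mathcal{C}_2)},\sigma_{B(\mathcal{C}_2)})$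 are topologically conjugate; they are coded equivalent if there is a finite chain $A=A_0,A_1,\dots,A_m=B$ of irreducible non-permutation $\{0,1\}$-matrices with consecutive shifts elementary coded equivalent. $(X_A,\sigma_A)$ and $(X_B,\sigma_B)$ are continuously orbit equivalent if there exist a homeomorphism $h:X_A\to X_B$ and continuous maps $k_1,l_1:X_A\to\mathbb{Z}_+$, $k_2,l_2:X_B\to\mathbb{Z}_+$ such that $\sigma_B^{k_1(x)}(h(\sigma_A(x)))=\sigma_B^{l_1(x)}(h(x))$ for $x\in X_A$ and $\sigma_A^{k_2(y)}(h^{-1}(\sigma_B(y)))=\sigma_A^{l_2(y)}(h^{-1}(y))$ for $y\in X_B$. *)

theory Defs
  imports "HOL-Analysis.Analysis"
begin

(* An N x N {0,1}-matrix is represented by N and A :: nat => nat => bool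
   (A i j = True iff the entry (i,j) is 1); only entries with i,j in {1..N} matter.  Points of X_A are sequences nat => nat, carrying the
   product topology of the discrete space nat (instance from Function_Topology). *)

definition XA :: "nat \<Rightarrow> (nat \<Rightarrow> nat \<Rightarrow> bool) \<Rightarrow> (nat \<Rightarrow> nat) set" where
  "XA N A = {x. \<forall>n. x n \<in> {1..N} \<and> A (x n) (x (Suc n))}"

definition shift :: "(nat \<Rightarrow> nat) \<Rightarrow> (nat \<Rightarrow> nat)" where
  "shift x = (\<lambda>n. x (Suc n))"

(* irreducible: for all i,j there is n >= 1 with A^n(i,j) > 0, i.e. a path of length n from i to j *)
definition irreducible_mat :: "nat \<Rightarrow> (nat \<Rightarrow> nat \<Rightarrow> bool) \<Rightarrow> bool" where
  "irreducible_mat N A \<longleftrightarrow>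
     (\<forall>i\<in>{1..N}. \<forall>j\<in>{1..N}. \<exists>p. 2 \<le> length p \<and> hd p = i \<and> last p = j \<and>
        set p \<subseteq> {1..N} \<and> (\<forall>k < length p - 1. A (p ! k) (p ! Suc k)))"

definition permutation_mat :: "nat \<Rightarrow> (nat \<Rightarrow> nat \<Rightarrow> bool) \<Rightarrow> bool" where
  "permutation_mat N A \<longleftrightarrow>
     (\<forall>i\<in>{1..N}. \<exists>!j. j \<in> {1..N} \<and> A i j) \<and> (\<forall>j\<in>{1..N}. \<exists>!i. i \<in> {1..N} \<and> A i j)"

definition adm :: "nat \<Rightarrow> (nat \<Rightarrow> nat \<Rightarrow> bool) \<Rightarrow> nat list \<Rightarrow> bool" where
  "adm N A w \<longleftrightarrow> w = [] \<or> (\<exists>x\<in>XA N A. \<exists>i. w = map x [i..<i + length w])"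

definition is_code :: "nat \<Rightarrow> (nat \<Rightarrow> nat \<Rightarrow> bool) \<Rightarrow> nat list set \<Rightarrow> bool" where
  "is_code N A C \<longleftrightarrow> C \<noteq> {} \<and> (\<forall>w\<in>C. adm N A w) \<and>
     (\<forall>us vs. set us \<subseteq> C \<longrightarrow> set vs \<subseteq> C \<longrightarrow> concat us = concat vs \<longrightarrow> us = vs)"

definition is_prefix_code :: "nat \<Rightarrow> (nat \<Rightarrow> nat \<Rightarrow> bool) \<Rightarrow> nat list set \<Rightarrow> bool" where
  "is_prefix_code N A C \<longleftrightarrow> is_code N A C \<and>
     (\<forall>u\<in>C. \<forall>v\<in>C. u \<noteq> v \<longrightarrow> \<not> (\<exists>z. v = u @ z))"

definition right_markov_code ::
  "nat \<Rightarrow> (nat \<Rightarrow> nat \<Rightarrow> bool) \<Rightarrow> nat \<Rightarrow> (nat \<Rightarrow> nat list) \<Rightarrow> bool" where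
  "right_markov_code N A M \<omega> \<longleftrightarrow>
     inj_on \<omega> {1..M} \<and> is_prefix_code N A (\<omega> ` {1..M}) \<and>
     (\<forall>\<gamma>. adm N A \<gamma> \<longrightarrow> (\<exists>\<eta>. adm N A \<eta> \<and> adm N A (\<gamma> @ \<eta>) \<and>
          (\<exists>!is. set is \<subseteq> {1..M} \<and> \<gamma> @ \<eta> = concat (map \<omega> is)))) \<and>
     (\<exists>L\<ge>1. \<forall>is. length is = L \<longrightarrow> set is \<subseteq> {1..M} \<longrightarrow> adm N A (concat (map \<omega> is)) \<longrightarrow>
          (\<exists>js. set js \<subseteq> {1..M} \<and>
               tl (\<omega> (hd is)) @ concat (map \<omega> (tl is)) = concat (map \<omega> js))) \<and>
     (\<forall>i\<in>{1..M}. \<forall>j\<in>{1..M}. \<exists>ns. set ns \<subseteq> {1..M} \<and>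
          adm N A (\<omega> i @ concat (map \<omega> ns) @ \<omega> j))"

definition code_matrix :: "(nat \<Rightarrow> nat \<Rightarrow> bool) \<Rightarrow> (nat \<Rightarrow> nat list) \<Rightarrow> nat \<Rightarrow> nat \<Rightarrow> bool" where
  "code_matrix A \<omega> = (\<lambda>i j. A (last (\<omega> i)) (hd (\<omega> j)))"

definition top_conjugate ::
  "nat \<Rightarrow> (nat \<Rightarrow> nat \<Rightarrow> bool) \<Rightarrow> nat \<Rightarrow> (nat \<Rightarrow> nat \<Rightarrow> bool) \<Rightarrow> bool" where
  "top_conjugate N A M B \<longleftrightarrow>
     (\<exists>h g. homeomorphism (XA N A) (XA M B) h g \<and> (\<forall>x\<in>XA N A. h (shift x) = shift (h x)))"

definition elem_coded_equiv ::
  "nat \<Rightarrow> (nat \<Rightarrow> nat \<Rightarrow> bool) \<Rightarrow> nat \<Rightarrow> (nat \<Rightarrow> nat \<Rightarrow> bool) \<Rightarrow> bool" where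
  "elem_coded_equiv N A M B \<longleftrightarrow>
     irreducible_mat N A \<and> \<not> permutation_mat N A \<and>
     irreducible_mat M B \<and> \<not> permutation_mat M B \<and>
     (\<exists>M1 \<omega>1 M2 \<omega>2. right_markov_code N A M1 \<omega>1 \<and> right_markov_code M B M2 \<omega>2 \<and>
        top_conjugate M1 (code_matrix A \<omega>1) M2 (code_matrix B \<omega>2))"

definition coded_equiv ::
  "nat \<Rightarrow> (nat \<Rightarrow> nat \<Rightarrow> bool) \<Rightarrow> nat \<Rightarrow> (nat \<Rightarrow> nat \<Rightarrow> bool) \<Rightarrow> bool" where
  "coded_equiv N A M B \<longleftrightarrow>
     (\<exists>ch :: (nat \<times> (nat \<Rightarrow> nat \<Rightarrow> bool)) list. ch \<noteq> [] \<and> hd ch = (N, A) \<and> last ch = (M, B) \<and>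
        (\<forall>k < length ch. irreducible_mat (fst (ch ! k)) (snd (ch ! k)) \<and>
                          \<not> permutation_mat (fst (ch ! k)) (snd (ch ! k))) \<and>
        (\<forall>k < length ch - 1. elem_coded_equiv (fst (ch ! k)) (snd (ch ! k))
                                                (fst (ch ! Suc k)) (snd (ch ! Suc k))))"

definition cont_orbit_equiv ::
  "nat \<Rightarrow> (nat \<Rightarrow> nat \<Rightarrow> bool) \<Rightarrow> nat \<Rightarrow> (nat \<Rightarrow> nat \<Rightarrow> bool) \<Rightarrow> bool" where
  "cont_orbit_equiv N A M B \<longleftrightarrow>
     (\<exists>h g k1 l1 k2 l2. homeomorphism (XA N A) (XA M B) h g \<and>
        continuous_on (XA N A) (k1 :: (nat \<Rightarrow> nat) \<Rightarrow> nat) \<and> continuous_on (XA N A) l1 \<and>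
        continuous_on (XA M B) (k2 :: (nat \<Rightarrow> nat) \<Rightarrow> nat) \<and> continuous_on (XA M B) l2 \<and>
        (\<forall>x\<in>XA N A. (shift ^^ k1 x) (h (shift x)) = (shift ^^ l1 x) (h x)) \<and>
        (\<forall>y\<in>XA M B. (shift ^^ k2 y) (g (shift y)) = (shift ^^ l2 y) (g y)))"

end

theory Submission
  imports Defs "HOL-Library.Omega_Words_Fun"
begin

(*
  Concatenating code words turns a right Markov code omega of X_A into a coding map
  phi : X_{A(C)} -> X_A.  Code words are nonempty and prefix free, so the first k blocks of y are
  read off the first k * max |omega i| symbols of phi y: phi is injective with continuous inverse,
  and condition (i) makes it onto.  Moreover phi (sigma y) = sigma^|omega (y 0)| (phi y), and
  condition (ii) recodes the tail of the first L blocks of phi^-1 x as a coding of sigma x, so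
  sigma^k(x) (phi^-1 (sigma x)) = sigma^L (phi^-1 x).  Thus phi and phi^-1 are continuous orbit maps.
  Conjugacies are orbit maps with cocycles 0 and 1, and continuous orbit maps compose because the
  cocycles of sigma^n are the Birkhoff sums of those of sigma.  A coded equivalence is a chain of
  such equivalences.
*)

section \<open>Cylinders and continuity on sequence spaces\<close>

definition cylinder :: "(nat \<Rightarrow> 'a) \<Rightarrow> nat \<Rightarrow> (nat \<Rightarrow> 'a) set" where
  "cylinder x m = {y. \<forall>i<m. y i = x i}"

lemma self_in_cylinder [simp]: "x \<in> cylinder x m"
  by (simp add: cylinder_def)

lemma cylinder_iff_prefix: "y' \<in> cylinder y k \<longleftrightarrow> prefix k y' = prefix k y"
  by (auto simp: cylinder_def subsequence_def)

lemma cylinder_mono: "m \<le> n \<Longrightarrow> cylinder x n \<subseteq> cylinder x m"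
  by (auto simp: cylinder_def)

lemma cylinder_mem_trans: "y \<in> cylinder x m \<Longrightarrow> z \<in> cylinder x m \<Longrightarrow> z \<in> cylinder y m"
  by (simp add: cylinder_def)

lemma open_cylinder: "open (cylinder (x :: nat \<Rightarrow> 'a::discrete_topology) m)"
proof -
  have "open {y. \<forall>i\<in>{..<m}. y (id i) \<in> {x i}}"
    by (rule product_topology_basis') (auto simp: open_discrete)
  moreover have "cylinder x m = {y. \<forall>i\<in>{..<m}. y (id i) \<in> {x i}}"
    by (auto simp: cylinder_def)
  ultimately show ?thesis
    by simp
qed

lemma open_contains_cylinder:
  fixes U :: "(nat \<Rightarrow> 'a::topological_space) set"
  assumes "open U" and "x \<in> U"
  obtains m where "cylinder x m \<subseteq> U"
proof -
  obtain X where X: "x \<in> Pi\<^sub>E UNIV X" "finite {i. X i \<noteq> UNIV}" "Pi\<^sub>E UNIV X \<subseteq> U"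
    using product_topology_open_contains_basis[of "\<lambda>i. euclidean" UNIV U x] assms
    by (auto simp: open_fun_def)
  obtain m where "\<And>i. X i \<noteq> UNIV \<Longrightarrow> i < m"
    using finite_nat_bounded[OF X(2)] by auto
  then have "cylinder x m \<subseteq> Pi\<^sub>E UNIV X"
    using X(1) by (fastforce simp: cylinder_def PiE_iff)
  with X(3) show thesis
    using that by blast
qed

lemma continuous_on_cylinder_iff:
  fixes h :: "(nat \<Rightarrow> 'a::discrete_topology) \<Rightarrow> 'b::topological_space"
  shows "continuous_on S h \<longleftrightarrow>
    (\<forall>x\<in>S. \<forall>B. open B \<longrightarrow> h x \<in> B \<longrightarrow> (\<exists>m. \<forall>x'\<in>S \<inter> cylinder x m. h x' \<in> B))"
proof
  assume h: "continuous_on S h"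
  show "\<forall>x\<in>S. \<forall>B. open B \<longrightarrow> h x \<in> B \<longrightarrow> (\<exists>m. \<forall>x'\<in>S \<inter> cylinder x m. h x' \<in> B)"
  proof (intro ballI allI impI)
    fix x B assume "x \<in> S" "open B" "h x \<in> B"
    then obtain U where U: "open U" "x \<in> U" "\<forall>x'\<in>S. x' \<in> U \<longrightarrow> h x' \<in> B"
      using h[unfolded continuous_on_topological] by meson
    obtain m where "cylinder x m \<subseteq> U"
      using open_contains_cylinder U(1,2) by blast
    with U(3) show "\<exists>m. \<forall>x'\<in>S \<inter> cylinder x m. h x' \<in> B"
      by blast
  qed
next
  assume H: "\<forall>x\<in>S. \<forall>B. open B \<longrightarrow> h x \<in> B \<longrightarrow> (\<exists>m. \<forall>x'\<in>S \<inter> cylinder x m. h x' \<in> B)"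
  show "continuous_on S h"
    unfolding continuous_on_topological
  proof (intro ballI allI impI)
    fix x B assume "x \<in> S" "open B" "h x \<in> B"
    then obtain m where "\<forall>x'\<in>S \<inter> cylinder x m. h x' \<in> B"
      using H by blast
    then show "\<exists>U. open U \<and> x \<in> U \<and> (\<forall>x'\<in>S. x' \<in> U \<longrightarrow> h x' \<in> B)"
      by (intro exI[of _ "cylinder x m"]) (auto simp: open_cylinder)
  qed
qed

lemma continuous_on_locally_constant_iff:
  fixes f :: "(nat \<Rightarrow> 'a::discrete_topology) \<Rightarrow> 'b::discrete_topology"
  shows "continuous_on S f \<longleftrightarrow> (\<forall>x\<in>S. \<exists>m. \<forall>x'\<in>S \<inter> cylinder x m. f x' = f x)"
  unfolding continuous_on_cylinder_iff
proof (intro iffI ballI allI impI)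
  fix x
  assume H: "\<forall>x\<in>S. \<forall>B. open B \<longrightarrow> f x \<in> B \<longrightarrow> (\<exists>m. \<forall>x'\<in>S \<inter> cylinder x m. f x' \<in> B)"
    and x: "x \<in> S"
  have "\<exists>m. \<forall>x'\<in>S \<inter> cylinder x m. f x' \<in> {f x}"
    by (rule H[rule_format, OF x open_discrete singletonI])
  then show "\<exists>m. \<forall>x'\<in>S \<inter> cylinder x m. f x' = f x"
    by simp
next
  fix x B
  assume "\<forall>x\<in>S. \<exists>m. \<forall>x'\<in>S \<inter> cylinder x m. f x' = f x" and "x \<in> S" "f x \<in> B"
  then obtain m where "\<forall>x'\<in>S \<inter> cylinder x m. f x' = f x"
    by blast
  with \<open>f x \<in> B\<close> show "\<exists>m. \<forall>x'\<in>S \<inter> cylinder x m. f x' \<in> B"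
    by (intro exI[of _ m]) auto
qed

lemma continuous_on_sequence_valued_iff:
  fixes h :: "(nat \<Rightarrow> 'a::discrete_topology) \<Rightarrow> nat \<Rightarrow> 'b::discrete_topology"
  shows "continuous_on S h \<longleftrightarrow>
    (\<forall>x\<in>S. \<forall>k. \<exists>m. \<forall>x'\<in>S \<inter> cylinder x m. h x' \<in> cylinder (h x) k)"
  unfolding continuous_on_cylinder_iff
proof (intro iffI ballI allI impI)
  fix x k
  assume H: "\<forall>x\<in>S. \<forall>B. open B \<longrightarrow> h x \<in> B \<longrightarrow> (\<exists>m. \<forall>x'\<in>S \<inter> cylinder x m. h x' \<in> B)"
    and x: "x \<in> S"
  show "\<exists>m. \<forall>x'\<in>S \<inter> cylinder x m. h x' \<in> cylinder (h x) k"
    using H x open_cylinder[of "h x" k] by simp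
next
  fix x B
  assume H: "\<forall>x\<in>S. \<forall>k. \<exists>m. \<forall>x'\<in>S \<inter> cylinder x m. h x' \<in> cylinder (h x) k"
    and x: "x \<in> S" and B: "open B" "h x \<in> B"
  obtain k where k: "cylinder (h x) k \<subseteq> B"
    using open_contains_cylinder[OF B] .
  obtain m where "\<forall>x'\<in>S \<inter> cylinder x m. h x' \<in> cylinder (h x) k"
    using H x by blast
  with k show "\<exists>m. \<forall>x'\<in>S \<inter> cylinder x m. h x' \<in> B"
    by blast
qed

lemma continuous_on_dependent:
  fixes k :: "'a::topological_space \<Rightarrow> 'c::discrete_topology"
  assumes k: "continuous_on S k" and G: "\<And>n. continuous_on S (G n)"
  shows "continuous_on S (\<lambda>x. G (k x) x)"
  unfolding continuous_on_topological
proof (intro ballI allI impI)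
  fix x B assume x: "x \<in> S" and B: "open B" "G (k x) x \<in> B"
  obtain U where U: "open U" "x \<in> U" "\<forall>x'\<in>S. x' \<in> U \<longrightarrow> k x' \<in> {k x}"
    using k[unfolded continuous_on_topological, rule_format, OF x open_discrete singletonI] by blast
  obtain V where V: "open V" "x \<in> V" "\<forall>x'\<in>S. x' \<in> V \<longrightarrow> G (k x) x' \<in> B"
    using G[unfolded continuous_on_topological, rule_format, OF x B] by blast
  show "\<exists>W. open W \<and> x \<in> W \<and> (\<forall>x'\<in>S. x' \<in> W \<longrightarrow> G (k x') x' \<in> B)"
    using U V by (intro exI[of _ "U \<inter> V"]) auto
qed

lemma continuous_on_suffix: "continuous_on S (suffix n :: (nat \<Rightarrow> 'a::topological_space) \<Rightarrow> _)"
  by (intro continuous_on_coordinatewise_then_product)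
    (simp add: continuous_on_subset[OF continuous_on_product_coordinates])

section \<open>Continuous orbit equivalence of shift-invariant sets\<close>

(* suffix n plays the role of sigma^n, see funpow_shift below. *)
definition continuous_orbit_map ::
  "(nat \<Rightarrow> nat) set \<Rightarrow> (nat \<Rightarrow> nat) set \<Rightarrow> ((nat \<Rightarrow> nat) \<Rightarrow> nat \<Rightarrow> nat) \<Rightarrow> bool" where
  "continuous_orbit_map S T h \<longleftrightarrow> h ` S \<subseteq> T \<and> continuous_on S h \<and>
     (\<exists>k l :: (nat \<Rightarrow> nat) \<Rightarrow> nat. continuous_on S k \<and> continuous_on S l \<and>
        (\<forall>x\<in>S. suffix (k x) (h (suffix 1 x)) = suffix (l x) (h x)))"

definition cont_orbit_equivalent :: "(nat \<Rightarrow> nat) set \<Rightarrow> (nat \<Rightarrow> nat) set \<Rightarrow> bool" where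
  "cont_orbit_equivalent S T \<longleftrightarrow>
     (\<exists>h g. homeomorphism S T h g \<and> continuous_orbit_map S T h \<and> continuous_orbit_map T S g)"

lemma continuous_orbit_mapI:
  assumes "h ` S \<subseteq> T" and "continuous_on S h" and "continuous_on S k" and "continuous_on S l"
    and "\<And>x. x \<in> S \<Longrightarrow> suffix (k x) (h (suffix 1 x)) = suffix (l x) (h x)"
  shows "continuous_orbit_map S T h"
  using assms unfolding continuous_orbit_map_def by blast

lemma continuous_orbit_mapE:
  assumes "continuous_orbit_map S T h"
  obtains k l where "h ` S \<subseteq> T" and "continuous_on S h" and "continuous_on S k"
    and "continuous_on S l" and "\<And>x. x \<in> S \<Longrightarrow> suffix (k x) (h (suffix 1 x)) = suffix (l x) (h x)"
  using assms unfolding continuous_orbit_map_def by blast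

lemma continuous_orbit_map_if_commute:
  assumes "h ` S \<subseteq> T" and "continuous_on S h" and "\<And>x. x \<in> S \<Longrightarrow> h (suffix 1 x) = suffix 1 (h x)"
  shows "continuous_orbit_map S T h"
  using assms by (intro continuous_orbit_mapI[where k = "\<lambda>x. 0" and l = "\<lambda>x. 1"]) auto

lemma suffix_in_invariant:
  assumes "suffix 1 ` S \<subseteq> S" and "x \<in> S"
  shows "suffix n x \<in> S"
proof (induction n)
  case (Suc n)
  then have "suffix 1 (suffix n x) \<in> S"
    using assms(1) by blast
  then show ?case
    by (simp only: suffix_suffix Suc_eq_plus1)
qed (simp add: assms(2))

lemma orbit_cocycle_iterate:
  assumes S: "suffix 1 ` S \<subseteq> S" and x: "x \<in> S"
    and cocycle: "\<And>x. x \<in> S \<Longrightarrow> suffix (k x) (h (suffix 1 x)) = suffix (l x) (h x)"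
  shows "suffix (\<Sum>i<n. k (suffix i x)) (h (suffix n x)) = suffix (\<Sum>i<n. l (suffix i x)) (h x)"
proof (induction n)
  case (Suc n)
  let ?z = "suffix n x" and ?K = "\<Sum>i<n. k (suffix i x)" and ?L = "\<Sum>i<n. l (suffix i x)"
  have "suffix (\<Sum>i<Suc n. k (suffix i x)) (h (suffix (Suc n) x)) = suffix ?K (suffix (k ?z) (h (suffix 1 ?z)))"
    by (simp add: ac_simps)
  also have "\<dots> = suffix ?K (suffix (l ?z) (h ?z))"
    using cocycle[OF suffix_in_invariant[OF S x]] by simp
  also have "\<dots> = suffix (l ?z) (suffix ?K (h ?z))"
    by (simp add: ac_simps)
  also have "\<dots> = suffix (l ?z) (suffix ?L (h x))"
    by (simp only: Suc.IH)
  also have "\<dots> = suffix (\<Sum>i<Suc n. l (suffix i x)) (h x)"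
    by (simp only: suffix_suffix sum.lessThan_Suc)
  finally show ?case .
qed simp

lemma continuous_orbit_map_compose:
  assumes h1: "continuous_orbit_map S T h1" and h2: "continuous_orbit_map T U h2"
    and S: "suffix 1 ` S \<subseteq> S" and T: "suffix 1 ` T \<subseteq> T"
  shows "continuous_orbit_map S U (h2 \<circ> h1)"
proof -
  obtain k1 l1 where h1S: "h1 ` S \<subseteq> T" and h1c: "continuous_on S h1"
    and kl1: "continuous_on S k1" "continuous_on S l1"
      "\<And>x. x \<in> S \<Longrightarrow> suffix (k1 x) (h1 (suffix 1 x)) = suffix (l1 x) (h1 x)"
    using h1 by (elim continuous_orbit_mapE) blast
  obtain k2 l2 where h2T: "h2 ` T \<subseteq> U" and h2c: "continuous_on T h2"
    and kl2: "continuous_on T k2" "continuous_on T l2"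
      "\<And>y. y \<in> T \<Longrightarrow> suffix (k2 y) (h2 (suffix 1 y)) = suffix (l2 y) (h2 y)"
    using h2 by (elim continuous_orbit_mapE) blast
  define a where "a n y = (\<Sum>i<n. k2 (suffix i y))" for n y
  define b where "b n y = (\<Sum>i<n. l2 (suffix i y))" for n y
  have ab: "suffix (a n y) (h2 (suffix n y)) = suffix (b n y) (h2 y)" if "y \<in> T" for n y
    unfolding a_def b_def using T that kl2(3) by (rule orbit_cocycle_iterate)
  (* Both sides are shifted onto h2 of the common point
     suffix (k1 x) (h1 (suffix 1 x)) = suffix (l1 x) (h1 x). *)
  define K where "K x = b (k1 x) (h1 (suffix 1 x)) + a (l1 x) (h1 x)" for x
  define L where "L x = b (l1 x) (h1 x) + a (k1 x) (h1 (suffix 1 x))" for x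
  have cocycle: "suffix (K x) ((h2 \<circ> h1) (suffix 1 x)) = suffix (L x) ((h2 \<circ> h1) x)"
    if x: "x \<in> S" for x
  proof -
    let ?y = "h1 x" and ?y' = "h1 (suffix 1 x)"
    have y: "?y \<in> T" "?y' \<in> T"
      using x S h1S by auto
    have "suffix (K x) (h2 ?y') = suffix (a (l1 x) ?y) (suffix (a (k1 x) ?y') (h2 (suffix (k1 x) ?y')))"
      using ab[OF y(2)] by (simp add: K_def ac_simps)
    also have "\<dots> = suffix (a (k1 x) ?y') (suffix (a (l1 x) ?y) (h2 (suffix (l1 x) ?y)))"
      using kl1(3)[OF x] by (simp add: ac_simps)
    also have "\<dots> = suffix (L x) (h2 ?y)"
      using ab[OF y(1)] by (simp add: L_def ac_simps)
    finally show ?thesis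
      by simp
  qed
  have "continuous_on T (a n)" "continuous_on T (b n)" for n
    unfolding a_def b_def using kl2(1,2) suffix_in_invariant[OF T]
    by (auto intro!: continuous_on_sum continuous_on_compose2[OF _ continuous_on_suffix])
  moreover have "continuous_on S (\<lambda>x. f (h1 x))" "continuous_on S (\<lambda>x. f (h1 (suffix 1 x)))"
    if "continuous_on T f" for f :: "_ \<Rightarrow> nat"
    using h1S S by (auto intro!: continuous_on_compose2[OF that] continuous_on_compose2[OF h1c]
        continuous_on_suffix h1c)
  ultimately have "continuous_on S K" "continuous_on S L"
    unfolding K_def L_def
    by (intro continuous_on_add
        continuous_on_dependent[OF kl1(1), where G = "\<lambda>n x. b n (h1 (suffix 1 x))"]
        continuous_on_dependent[OF kl1(2), where G = "\<lambda>n x. a n (h1 x)"]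
        continuous_on_dependent[OF kl1(2), where G = "\<lambda>n x. b n (h1 x)"]
        continuous_on_dependent[OF kl1(1), where G = "\<lambda>n x. a n (h1 (suffix 1 x))"]; blast)+
  moreover have "(h2 \<circ> h1) ` S \<subseteq> U" "continuous_on S (h2 \<circ> h1)"
    using h1S h2T continuous_on_compose[OF h1c continuous_on_subset[OF h2c h1S]] by auto
  ultimately show ?thesis
    using cocycle by (intro continuous_orbit_mapI[where k = K and l = L])
qed

lemma cont_orbit_equivalent_refl:
  assumes "suffix 1 ` S \<subseteq> S"
  shows "cont_orbit_equivalent S S"
proof -
  have "continuous_orbit_map S S (\<lambda>x. x)"
    using assms by (intro continuous_orbit_map_if_commute) auto
  then show ?thesis
    unfolding cont_orbit_equivalent_def using homeomorphism_ident by blast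
qed

lemma cont_orbit_equivalent_sym: "cont_orbit_equivalent S T \<Longrightarrow> cont_orbit_equivalent T S"
  unfolding cont_orbit_equivalent_def using homeomorphism_sym by blast

lemma cont_orbit_equivalent_trans:
  assumes "cont_orbit_equivalent S T" and "cont_orbit_equivalent T U"
    and "suffix 1 ` S \<subseteq> S" and "suffix 1 ` T \<subseteq> T" and "suffix 1 ` U \<subseteq> U"
  shows "cont_orbit_equivalent S U"
proof -
  obtain h1 g1 where 1: "homeomorphism S T h1 g1"
    "continuous_orbit_map S T h1" "continuous_orbit_map T S g1"
    using assms(1) unfolding cont_orbit_equivalent_def by blast
  obtain h2 g2 where 2: "homeomorphism T U h2 g2"
    "continuous_orbit_map T U h2" "continuous_orbit_map U T g2"
    using assms(2) unfolding cont_orbit_equivalent_def by blast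
  have "homeomorphism S U (h2 \<circ> h1) (g1 \<circ> g2)"
    using 1(1) 2(1) by (rule homeomorphism_compose)
  moreover have "continuous_orbit_map S U (h2 \<circ> h1)"
    using 1(2) 2(2) assms(3,4) by (rule continuous_orbit_map_compose)
  moreover have "continuous_orbit_map U S (g1 \<circ> g2)"
    using 2(3) 1(3) assms(5,4) by (rule continuous_orbit_map_compose)
  ultimately show ?thesis
    unfolding cont_orbit_equivalent_def by blast
qed

lemma cont_orbit_equivalent_if_conjugate:
  assumes hg: "homeomorphism S T h g" and comm: "\<forall>x\<in>S. h (suffix 1 x) = suffix 1 (h x)"
    and S: "suffix 1 ` S \<subseteq> S"
  shows "cont_orbit_equivalent S T"
proof -
  have "g (suffix 1 y) = suffix 1 (g y)" if y: "y \<in> T" for y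
  proof -
    have gy: "g y \<in> S" "h (g y) = y"
      using homeomorphism_image2[OF hg] homeomorphism_apply2[OF hg y] y by auto
    then have "g (suffix 1 y) = g (h (suffix 1 (g y)))"
      using comm gy by simp
    also have "\<dots> = suffix 1 (g y)"
      using homeomorphism_apply1[OF hg] S gy(1) by blast
    finally show ?thesis .
  qed
  then have "continuous_orbit_map T S g"
    using hg by (intro continuous_orbit_map_if_commute) (auto simp: homeomorphism_def)
  moreover have "continuous_orbit_map S T h"
    using hg comm by (intro continuous_orbit_map_if_commute) (auto simp: homeomorphism_def)
  ultimately show ?thesis
    using hg unfolding cont_orbit_equivalent_def by blast
qed

section \<open>Topological Markov shifts\<close>

lemma shift_eq_suffix: "shift = suffix 1"
  by (simp add: shift_def fun_eq_iff)

lemma funpow_shift: "shift ^^ n = suffix n"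
  by (induction n) (simp_all add: shift_eq_suffix fun_eq_iff)

lemma suffix_XA: "suffix 1 ` XA N A \<subseteq> XA N A"
  by (auto simp: XA_def)

lemma cont_orbit_equiv_iff: "cont_orbit_equiv N A M B \<longleftrightarrow> cont_orbit_equivalent (XA N A) (XA M B)"
proof
  assume "cont_orbit_equiv N A M B"
  then obtain h g and k1 l1 :: "(nat \<Rightarrow> nat) \<Rightarrow> nat" and k2 l2 :: "(nat \<Rightarrow> nat) \<Rightarrow> nat"
    where hg: "homeomorphism (XA N A) (XA M B) h g"
      and h: "continuous_on (XA N A) k1" "continuous_on (XA N A) l1"
        "\<forall>x\<in>XA N A. suffix (k1 x) (h (suffix 1 x)) = suffix (l1 x) (h x)"
      and g: "continuous_on (XA M B) k2" "continuous_on (XA M B) l2"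
        "\<forall>y\<in>XA M B. suffix (k2 y) (g (suffix 1 y)) = suffix (l2 y) (g y)"
    unfolding cont_orbit_equiv_def funpow_shift unfolding shift_eq_suffix by blast
  have "continuous_orbit_map (XA N A) (XA M B) h"
    using homeomorphism_image1[OF hg] homeomorphism_cont1[OF hg] h
    by (intro continuous_orbit_mapI[where k = k1 and l = l1]) auto
  moreover have "continuous_orbit_map (XA M B) (XA N A) g"
    using homeomorphism_image2[OF hg] homeomorphism_cont2[OF hg] g
    by (intro continuous_orbit_mapI[where k = k2 and l = l2]) auto
  ultimately show "cont_orbit_equivalent (XA N A) (XA M B)"
    unfolding cont_orbit_equivalent_def using hg by blast
next
  assume "cont_orbit_equivalent (XA N A) (XA M B)"
  then obtain h g where hg: "homeomorphism (XA N A) (XA M B) h g"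
    and "continuous_orbit_map (XA N A) (XA M B) h" "continuous_orbit_map (XA M B) (XA N A) g"
    unfolding cont_orbit_equivalent_def by blast
  then obtain k1 l1 k2 l2 :: "(nat \<Rightarrow> nat) \<Rightarrow> nat"
    where "continuous_on (XA N A) k1" "continuous_on (XA N A) l1"
      "\<And>x. x \<in> XA N A \<Longrightarrow> suffix (k1 x) (h (suffix 1 x)) = suffix (l1 x) (h x)"
      "continuous_on (XA M B) k2" "continuous_on (XA M B) l2"
      "\<And>y. y \<in> XA M B \<Longrightarrow> suffix (k2 y) (g (suffix 1 y)) = suffix (l2 y) (g y)"
    by (elim continuous_orbit_mapE) blast
  with hg show "cont_orbit_equiv N A M B"
    unfolding cont_orbit_equiv_def funpow_shift unfolding shift_eq_suffix by blast
qed

lemma cont_orbit_equivalent_if_top_conjugate: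
  "top_conjugate N A M B \<Longrightarrow> cont_orbit_equivalent (XA N A) (XA M B)"
  unfolding top_conjugate_def shift_eq_suffix
  using cont_orbit_equivalent_if_conjugate suffix_XA by blast

lemma adm_prefix: "x \<in> XA N A \<Longrightarrow> adm N A (prefix n x)"
  unfolding adm_def subsequence_def by (intro disjI2 bexI[of _ x] exI[of _ 0]) simp_all

lemma adm_imp_path:
  assumes "adm N A w"
  shows "set w \<subseteq> {1..N} \<and> successively A w"
proof (cases "w = []")
  case False
  then obtain x i where x: "x \<in> XA N A" and w: "w = map x [i..<i + length w]"
    using assms unfolding adm_def by blast
  have "set (map x [i..<j]) \<subseteq> {1..N} \<and> successively A (map x [i..<j])" for j
    using x by (auto simp: XA_def successively_conv_nth)
  then show ?thesis
    using w by metis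
qed simp

lemma in_XA_code_matrix_iff:
  "y \<in> XA M (code_matrix A \<omega>) \<longleftrightarrow>
    range y \<subseteq> {1..M} \<and> (\<forall>i. A (last (\<omega> (y i))) (hd (\<omega> (y (Suc i)))))"
  by (auto simp: XA_def code_matrix_def image_subset_iff)

section \<open>Coding maps of prefix codes\<close>

lemma prefix_Suc_Cons: "prefix (Suc n) y = y 0 # prefix n (suffix 1 y)"
  by (rule nth_equalityI) (auto simp: subsequence_def nth_Cons simp del: upt_Suc split: nat.split)

(* The infinite concatenation omega (y 0) omega (y 1) ...: for nonempty code words its n-th
   symbol already occurs among the first n + 1 blocks. *)
definition code_map :: "(nat \<Rightarrow> 'a list) \<Rightarrow> (nat \<Rightarrow> nat) \<Rightarrow> nat \<Rightarrow> 'a" where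
  "code_map \<omega> y n = concat (map \<omega> (prefix (Suc n) y)) ! n"

lemma code_map_cylinder: "y' \<in> cylinder y k \<Longrightarrow> code_map \<omega> y' \<in> cylinder (code_map \<omega> y) k"
proof -
  assume "y' \<in> cylinder y k"
  then have "prefix (Suc n) y' = prefix (Suc n) y" if "n < k" for n
    using that cylinder_mono[of "Suc n" k y] cylinder_iff_prefix by (metis Suc_leI subsetD)
  then show ?thesis
    by (simp add: cylinder_def code_map_def)
qed

lemma nth_concat_prefix_mono:
  assumes "k \<le> k'" and "n < length (concat (map \<omega> (prefix k y)))"
  shows "concat (map \<omega> (prefix k' y)) ! n = concat (map \<omega> (prefix k y)) ! n"
proof -
  have "prefix k' y = prefix k y @ y [k \<rightarrow> k']"
    using subsequence_append[where i = k and j = "k' - k" and w = y] assms(1) by simp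
  with assms(2) show ?thesis
    by (simp add: nth_append)
qed

locale indexed_prefix_code =
  fixes M :: nat and \<omega> :: "nat \<Rightarrow> 'a list"
  assumes code_word_nonempty: "i \<in> {1..M} \<Longrightarrow> \<omega> i \<noteq> []"
    and code_word_prefix_free: "i \<in> {1..M} \<Longrightarrow> j \<in> {1..M} \<Longrightarrow> \<omega> j = \<omega> i @ z \<Longrightarrow> i = j"
begin

definition max_code_length :: nat where
  "max_code_length = Max (length ` \<omega> ` {1..M})"

lemma length_code_word_le: "i \<in> {1..M} \<Longrightarrow> length (\<omega> i) \<le> max_code_length"
  unfolding max_code_length_def by (rule Max_ge) auto

lemma length_concat_prefix:
  assumes "range y \<subseteq> {1..M}"
  shows "k \<le> length (concat (map \<omega> (prefix k y)))"
    and "length (concat (map \<omega> (prefix k y))) \<le> k * max_code_length"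
proof (induction k)
  case (Suc k)
  have "y k \<in> {1..M}"
    using assms by blast
  then have "1 \<le> length (\<omega> (y k))" "length (\<omega> (y k)) \<le> max_code_length"
    using code_word_nonempty length_code_word_le by (auto simp: Suc_le_eq)
  with Suc show "Suc k \<le> length (concat (map \<omega> (prefix (Suc k) y)))"
    and "length (concat (map \<omega> (prefix (Suc k) y))) \<le> Suc k * max_code_length"
    by simp_all
qed simp_all

lemma code_map_Cons:
  assumes y: "range y \<subseteq> {1..M}"
  shows "code_map \<omega> y = \<omega> (y 0) \<frown> code_map \<omega> (suffix 1 y)"
proof
  fix n
  let ?w = "concat (map \<omega> (prefix n (suffix 1 y)))"
  have split: "code_map \<omega> y n = (\<omega> (y 0) @ ?w) ! n"
    by (simp add: code_map_def prefix_Suc_Cons)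
  show "code_map \<omega> y n = (\<omega> (y 0) \<frown> code_map \<omega> (suffix 1 y)) n"
  proof (cases "n < length (\<omega> (y 0))")
    case True
    then show ?thesis
      by (simp add: split nth_append)
  next
    case False
    define j where "j = n - length (\<omega> (y 0))"
    have y': "range (suffix 1 y) \<subseteq> {1..M}"
      using y by (auto simp: image_subset_iff)
    have "\<omega> (y 0) \<noteq> []"
      using y code_word_nonempty by blast
    then have "Suc j \<le> n"
      using False unfolding j_def by (cases "\<omega> (y 0)") auto
    moreover have "j < length (concat (map \<omega> (prefix (Suc j) (suffix 1 y))))"
      using length_concat_prefix(1)[OF y', of "Suc j"] by simp
    ultimately have "?w ! j = code_map \<omega> (suffix 1 y) j"
      unfolding code_map_def by (rule nth_concat_prefix_mono)
    then show ?thesis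
      using False by (simp add: split nth_append j_def)
  qed
qed

lemma code_map_conc:
  "set js \<subseteq> {1..M} \<Longrightarrow> range s \<subseteq> {1..M} \<Longrightarrow>
    code_map \<omega> (js \<frown> s) = concat (map \<omega> js) \<frown> code_map \<omega> s"
proof (induction js)
  case (Cons j js)
  let ?y = "(j # js) \<frown> s"
  have y: "range ?y \<subseteq> {1..M}"
    using Cons.prems by (simp del: build_cons)
  have head: "?y 0 = j" and tail: "suffix 1 ?y = js \<frown> s"
    by (simp_all del: build_cons)
  have "code_map \<omega> ?y = \<omega> j \<frown> code_map \<omega> (js \<frown> s)"
    using code_map_Cons[OF y] by (simp only: head tail)
  with Cons show ?case
    by (simp del: build_cons)
qed simp

lemma code_map_prefix_suffix:
  assumes "range y \<subseteq> {1..M}"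
  shows "code_map \<omega> y = concat (map \<omega> (prefix k y)) \<frown> code_map \<omega> (suffix k y)"
proof -
  have "set (prefix k y) \<subseteq> {1..M}" "range (suffix k y) \<subseteq> {1..M}"
    using assms by (auto simp: subsequence_def image_subset_iff)
  from code_map_conc[OF this] show ?thesis
    unfolding prefix_suffix[symmetric] .
qed

lemma code_map_block:
  assumes y: "range y \<subseteq> {1..M}" and r: "r < length (\<omega> (y i))"
  shows "code_map \<omega> y (length (concat (map \<omega> (prefix i y))) + r) = \<omega> (y i) ! r"
proof -
  have "range (suffix i y) \<subseteq> {1..M}"
    using y by (auto simp: image_subset_iff)
  then have "code_map \<omega> (suffix i y) = \<omega> (y i) \<frown> code_map \<omega> (suffix (Suc i) y)"
    by (simp add: code_map_Cons)
  with code_map_prefix_suffix[OF y, of i] r show ?thesis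
    by simp
qed

lemma code_word_eqI:
  assumes "i \<in> {1..M}" "j \<in> {1..M}"
    and "\<And>r. r < length (\<omega> i) \<Longrightarrow> r < length (\<omega> j) \<Longrightarrow> \<omega> i ! r = \<omega> j ! r"
  shows "i = j"
proof -
  have prefix_free: "u = v"
    if "u \<in> {1..M}" "v \<in> {1..M}" "length (\<omega> u) \<le> length (\<omega> v)"
      and "\<And>r. r < length (\<omega> u) \<Longrightarrow> \<omega> u ! r = \<omega> v ! r" for u v
  proof -
    have "take (length (\<omega> u)) (\<omega> v) = \<omega> u"
      using that by (intro nth_equalityI) auto
    then have "\<omega> v = \<omega> u @ drop (length (\<omega> u)) (\<omega> v)"
      by (metis append_take_drop_id)
    with that(1,2) show ?thesis
      by (rule code_word_prefix_free)
  qed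
  show ?thesis
    using assms prefix_free[of i j] prefix_free[of j i] by (cases "length (\<omega> i) \<le> length (\<omega> j)") auto
qed

(* Block k starts before position k * max_code_length, so the code words in block k of y and y'
   agree on their common length, and prefix-freeness identifies them. *)
lemma code_map_decode:
  assumes y: "range y \<subseteq> {1..M}" and y': "range y' \<subseteq> {1..M}"
    and agree: "code_map \<omega> y' \<in> cylinder (code_map \<omega> y) (k * max_code_length)"
  shows "y' \<in> cylinder y k"
  using agree
proof (induction k)
  case (Suc k)
  then have "y' \<in> cylinder y k"
    using cylinder_mono[of "k * max_code_length" "Suc k * max_code_length"] by auto
  then have same_blocks: "prefix k y' = prefix k y"
    by (simp add: cylinder_iff_prefix)
  let ?p = "length (concat (map \<omega> (prefix k y)))"
  have "?p \<le> k * max_code_length"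
    using length_concat_prefix(2)[OF y] .
  have "y' k = y k"
  proof (rule code_word_eqI)
    show "y' k \<in> {1..M}" "y k \<in> {1..M}"
      using y y' by blast+
    fix r assume r: "r < length (\<omega> (y' k))" "r < length (\<omega> (y k))"
    have "?p + r < Suc k * max_code_length"
      using \<open>?p \<le> k * max_code_length\<close> r(2) length_code_word_le[OF \<open>y k \<in> {1..M}\<close>] by simp
    then have "code_map \<omega> y' (?p + r) = code_map \<omega> y (?p + r)"
      using Suc.prems by (simp add: cylinder_def)
    then show "\<omega> (y' k) ! r = \<omega> (y k) ! r"
      using code_map_block[OF y r(2)] code_map_block[OF y' r(1)] same_blocks by simp
  qed
  with \<open>y' \<in> cylinder y k\<close> show ?case
    by (simp add: cylinder_def less_Suc_eq)
qed (simp add: cylinder_def)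

(* Diagonal argument: by decoding, Y n agrees with Y (Suc k * max_code_length) on the first
   k + 1 blocks once n is large enough. *)
lemma code_map_limit:
  assumes Y: "\<And>n. range (Y n) \<subseteq> {1..M}" and Y_x: "\<And>n. code_map \<omega> (Y n) \<in> cylinder x n"
  obtains y where "range y \<subseteq> {1..M}" and "code_map \<omega> y = x"
proof -
  define y where "y k = Y (Suc k * max_code_length) k" for k
  have Y_y: "Y n k = y k" if "Suc k * max_code_length \<le> n" for n k
  proof -
    let ?m = "Suc k * max_code_length"
    have "code_map \<omega> (Y n) \<in> cylinder x ?m"
      using Y_x[of n] cylinder_mono[OF that] by blast
    then have "code_map \<omega> (Y n) \<in> cylinder (code_map \<omega> (Y ?m)) ?m"
      using Y_x[of ?m] by (rule cylinder_mem_trans[rotated])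
    then have "Y n \<in> cylinder (Y ?m) (Suc k)"
      by (rule code_map_decode[OF Y Y])
    then show ?thesis
      by (simp add: cylinder_def y_def)
  qed
  have "code_map \<omega> y = x"
  proof
    fix n
    let ?m = "Suc n * max_code_length"
    have "y \<in> cylinder (Y ?m) (Suc n)"
      using Y_y by (simp add: cylinder_def)
    then have "code_map \<omega> y \<in> cylinder (code_map \<omega> (Y ?m)) (Suc n)"
      by (rule code_map_cylinder)
    then have "code_map \<omega> y n = code_map \<omega> (Y ?m) n"
      by (simp add: cylinder_def)
    moreover have "n < ?m"
      using length_concat_prefix[OF Y[of ?m], of "Suc n"] by linarith
    ultimately show "code_map \<omega> y n = x n"
      using Y_x[of ?m] by (simp add: cylinder_def)
  qed
  moreover have "range y \<subseteq> {1..M}"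
    using Y by (auto simp: y_def)
  ultimately show thesis
    using that by blast
qed

end

section \<open>Right Markov codes\<close>

locale right_markov_coding =
  fixes N :: nat and A :: "nat \<Rightarrow> nat \<Rightarrow> bool" and M :: nat and \<omega> :: "nat \<Rightarrow> nat list"
  assumes right_markov: "right_markov_code N A M \<omega>"
begin

lemma code_word_adm: "i \<in> {1..M} \<Longrightarrow> adm N A (\<omega> i)"
  using right_markov unfolding right_markov_code_def is_prefix_code_def is_code_def by blast

lemma code_nonempty: "1 \<le> M"
  using right_markov unfolding right_markov_code_def is_prefix_code_def is_code_def by auto

sublocale indexed_prefix_code M \<omega>
proof
  have unique: "us = vs"
    if "set us \<subseteq> \<omega> ` {1..M}" "set vs \<subseteq> \<omega> ` {1..M}" "concat us = concat vs" for us vs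
    using right_markov that unfolding right_markov_code_def is_prefix_code_def is_code_def by blast
  fix i assume i: "i \<in> {1..M}"
  show "\<omega> i \<noteq> []"
  proof
    assume empty: "\<omega> i = []"
    have "\<omega> i \<in> \<omega> ` {1..M}"
      using i by (rule imageI)
    then have "[\<omega> i] = []"
      by (intro unique) (simp_all add: empty)
    then show False
      by simp
  qed
next
  fix i j z assume ij: "i \<in> {1..M}" "j \<in> {1..M}" and "\<omega> j = \<omega> i @ z"
  then have "\<omega> i = \<omega> j"
    using right_markov unfolding right_markov_code_def is_prefix_code_def by blast
  with ij show "i = j"
    using right_markov unfolding right_markov_code_def inj_on_def by blast
qed

lemma right_markov_extension:
  "adm N A \<gamma> \<Longrightarrow> \<exists>is \<eta>. set is \<subseteq> {1..M} \<and> \<gamma> @ \<eta> = concat (map \<omega> is)"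
  using right_markov unfolding right_markov_code_def by blast

lemma right_markov_recoding:
  obtains L J where "1 \<le> L"
    and "\<And>is. length is = L \<Longrightarrow> set is \<subseteq> {1..M} \<Longrightarrow> adm N A (concat (map \<omega> is)) \<Longrightarrow>
      set (J is) \<subseteq> {1..M} \<and> tl (concat (map \<omega> is)) = concat (map \<omega> (J is))"
proof -
  obtain L where L: "1 \<le> L"
    and recode: "\<forall>is. length is = L \<longrightarrow> set is \<subseteq> {1..M} \<longrightarrow> adm N A (concat (map \<omega> is)) \<longrightarrow>
      (\<exists>js. set js \<subseteq> {1..M} \<and> tl (\<omega> (hd is)) @ concat (map \<omega> (tl is)) = concat (map \<omega> js))"
    using right_markov unfolding right_markov_code_def by blast
  have "tl (concat (map \<omega> is)) = tl (\<omega> (hd is)) @ concat (map \<omega> (tl is))"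
    if "length is = L" "set is \<subseteq> {1..M}" for "is"
    using that L code_word_nonempty by (cases "is") auto
  with recode have "\<exists>js. set js \<subseteq> {1..M} \<and> tl (concat (map \<omega> is)) = concat (map \<omega> js)"
    if "length is = L" "set is \<subseteq> {1..M}" "adm N A (concat (map \<omega> is))" for "is"
    using that by metis
  then show thesis
    using that[OF L] by (metis (no_types, lifting) someI_ex)
qed

abbreviation X_code :: "(nat \<Rightarrow> nat) set" where
  "X_code \<equiv> XA M (code_matrix A \<omega>)"

abbreviation code_inv :: "(nat \<Rightarrow> nat) \<Rightarrow> nat \<Rightarrow> nat" where
  "code_inv \<equiv> inv_into X_code (code_map \<omega>)"

lemma range_X_code: "y \<in> X_code \<Longrightarrow> range y \<subseteq> {1..M}"
  by (simp add: in_XA_code_matrix_iff)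

lemma concat_prefix_path:
  assumes y: "y \<in> X_code"
  shows "set (concat (map \<omega> (prefix k y))) \<subseteq> {1..N} \<and> successively A (concat (map \<omega> (prefix k y)))"
proof (induction k)
  case (Suc k)
  have yk: "y k \<in> {1..M}"
    using range_X_code[OF y] by blast
  have "concat (map \<omega> (prefix k y)) = [] \<or> A (last (concat (map \<omega> (prefix k y)))) (hd (\<omega> (y k)))"
  proof (cases k)
    case (Suc k')
    have "y k' \<in> {1..M}"
      using range_X_code[OF y] by blast
    then have "last (concat (map \<omega> (prefix k y))) = last (\<omega> (y k'))"
      using code_word_nonempty by (simp add: Suc)
    with y show ?thesis
      by (simp add: in_XA_code_matrix_iff Suc)
  qed simp
  with Suc.IH adm_imp_path[OF code_word_adm[OF yk]] show ?case
    by (auto simp: successively_append_iff)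
qed simp

lemma code_map_in_XA:
  assumes y: "y \<in> X_code"
  shows "code_map \<omega> y \<in> XA N A"
proof -
  have "code_map \<omega> y n \<in> {1..N} \<and> A (code_map \<omega> y n) (code_map \<omega> y (Suc n))" for n
  proof -
    let ?w = "concat (map \<omega> (prefix (Suc (Suc n)) y))"
    have len: "Suc n < length ?w"
      using length_concat_prefix(1)[OF range_X_code[OF y], of "Suc (Suc n)"] by simp
    have "code_map \<omega> y n = ?w ! n" "code_map \<omega> y (Suc n) = ?w ! Suc n"
      using code_map_prefix_suffix[OF range_X_code[OF y], of "Suc (Suc n)"] len by simp_all
    with len concat_prefix_path[OF y] show ?thesis
      by (metis Suc_lessD nth_mem subsetD successively_nth)
  qed
  then show ?thesis
    by (simp add: XA_def)
qed

lemma in_X_code_if_code_map_in_XA: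
  assumes y: "range y \<subseteq> {1..M}" and x: "code_map \<omega> y \<in> XA N A"
  shows "y \<in> X_code"
  unfolding in_XA_code_matrix_iff
proof (intro conjI y allI)
  fix i
  let ?p = "length (concat (map \<omega> (prefix i y)))" and ?l = "length (\<omega> (y i))"
  have ne: "\<omega> (y i) \<noteq> []" "\<omega> (y (Suc i)) \<noteq> []"
    using y code_word_nonempty by blast+
  then have next_block: "Suc (?p + (?l - 1)) = ?p + ?l"
    by simp
  have "last (\<omega> (y i)) = code_map \<omega> y (?p + (?l - 1))"
    and "hd (\<omega> (y (Suc i))) = code_map \<omega> y (Suc (?p + (?l - 1)))"
    using code_map_block[OF y, of "?l - 1" i] code_map_block[OF y, of 0 "Suc i"] ne
    unfolding next_block by (simp_all add: last_conv_nth hd_conv_nth)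
  with x show "A (last (\<omega> (y i))) (hd (\<omega> (y (Suc i))))"
    by (simp add: XA_def)
qed

lemma inj_on_code_map: "inj_on (code_map \<omega>) X_code"
proof (rule inj_onI)
  fix y y' assume "y \<in> X_code" "y' \<in> X_code" "code_map \<omega> y = code_map \<omega> y'"
  then have agree: "y' \<in> cylinder y k" for k
    using code_map_decode[OF range_X_code range_X_code] by simp
  show "y = y'"
  proof
    fix i
    show "y i = y' i"
      using agree[of "Suc i"] by (simp add: cylinder_def)
  qed
qed

(* Condition (i) codes an extension of each prefix of x; the finite coding is padded with the
   code word omega 1. *)
lemma approximate_codings:
  assumes x: "x \<in> XA N A"
  obtains Y where "\<And>n. range (Y n) \<subseteq> {1..M}" and "\<And>n. code_map \<omega> (Y n) \<in> cylinder x n"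
proof -
  have "\<forall>n. \<exists>is \<eta>. set is \<subseteq> {1..M} \<and> prefix n x @ \<eta> = concat (map \<omega> is)"
    using right_markov_extension[OF adm_prefix[OF x]] by blast
  then obtain I where I: "\<And>n. set (I n) \<subseteq> {1..M}"
    "\<And>n. \<exists>\<eta>. prefix n x @ \<eta> = concat (map \<omega> (I n))"
    by metis
  define Y where "Y n = I n \<frown> (\<lambda>_. 1)" for n
  have "range (Y n) \<subseteq> {1..M}" for n
    using I(1) code_nonempty by (auto simp: Y_def)
  moreover have "code_map \<omega> (Y n) \<in> cylinder x n" for n
  proof -
    obtain \<eta> where "prefix n x @ \<eta> = concat (map \<omega> (I n))"
      using I(2) by blast
    then have "code_map \<omega> (Y n) = prefix n x \<frown> (\<eta> \<frown> code_map \<omega> (\<lambda>_. 1))"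
      using code_map_conc[OF I(1)] code_nonempty by (simp add: Y_def)
    then show ?thesis
      by (simp add: cylinder_iff_prefix)
  qed
  ultimately show thesis
    by (rule that)
qed

lemma code_map_image: "code_map \<omega> ` X_code = XA N A"
proof
  show "code_map \<omega> ` X_code \<subseteq> XA N A"
    using code_map_in_XA by blast
  show "XA N A \<subseteq> code_map \<omega> ` X_code"
  proof
    fix x assume x: "x \<in> XA N A"
    obtain y where "range y \<subseteq> {1..M}" and "code_map \<omega> y = x"
      using approximate_codings[OF x] code_map_limit by metis
    with x show "x \<in> code_map \<omega> ` X_code"
      using in_X_code_if_code_map_in_XA by blast
  qed
qed

lemma code_inv_in_X_code: "x \<in> XA N A \<Longrightarrow> code_inv x \<in> X_code"
  using code_map_image by (auto intro: inv_into_into)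

lemma code_map_code_inv: "x \<in> XA N A \<Longrightarrow> code_map \<omega> (code_inv x) = x"
  using code_map_image by (simp add: f_inv_into_f)

lemma continuous_on_code_map: "continuous_on X_code (code_map \<omega>)"
  unfolding continuous_on_sequence_valued_iff using code_map_cylinder by blast

lemma continuous_on_code_inv: "continuous_on (XA N A) code_inv"
  unfolding continuous_on_sequence_valued_iff
proof (intro ballI allI)
  fix x k assume x: "x \<in> XA N A"
  have "code_inv x' \<in> cylinder (code_inv x) k"
    if "x' \<in> XA N A \<inter> cylinder x (k * max_code_length)" for x'
    using that x code_map_decode[OF range_X_code range_X_code] code_inv_in_X_code code_map_code_inv
    by auto
  then show "\<exists>m. \<forall>x'\<in>XA N A \<inter> cylinder x m. code_inv x' \<in> cylinder (code_inv x) k"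
    by blast
qed

lemma homeomorphism_code_map: "homeomorphism X_code (XA N A) (code_map \<omega>) code_inv"
proof -
  have bij: "bij_betw (code_map \<omega>) X_code (XA N A)"
    using inj_on_code_map code_map_image by (simp add: bij_betw_def)
  show ?thesis
    unfolding homeomorphism_def
    using bij_betw_imp_surj_on[OF bij_betw_inv_into[OF bij]] inv_into_f_f[OF inj_on_code_map]
      code_map_code_inv code_map_image continuous_on_code_map continuous_on_code_inv
    by auto
qed

lemma continuous_orbit_map_code_map: "continuous_orbit_map X_code (XA N A) (code_map \<omega>)"
proof (rule continuous_orbit_mapI[where k = "\<lambda>y. 0" and l = "\<lambda>y. length (\<omega> (y 0))"])
  show "code_map \<omega> ` X_code \<subseteq> XA N A"
    using code_map_image by simp
  show "continuous_on X_code (code_map \<omega>)"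
    by (rule continuous_on_code_map)
  show "continuous_on X_code (\<lambda>y. 0 :: nat)"
    by simp
  show "continuous_on X_code (\<lambda>y. length (\<omega> (y 0)))"
    by (rule continuous_on_compose2[of UNIV "\<lambda>i. length (\<omega> i)"])
      (simp_all add: continuous_on_subset[OF continuous_on_product_coordinates])
  fix y assume "y \<in> X_code"
  then show "suffix 0 (code_map \<omega> (suffix 1 y)) = suffix (length (\<omega> (y 0))) (code_map \<omega> y)"
    using code_map_Cons[OF range_X_code] by simp
qed

lemma code_inv_suffix:
  assumes x: "x \<in> XA N A" and L: "1 \<le> L" and js: "set js \<subseteq> {1..M}"
    and recode: "concat (map \<omega> js) = tl (concat (map \<omega> (prefix L (code_inv x))))"
  shows "code_inv (suffix 1 x) = js \<frown> suffix L (code_inv x)"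
proof -
  let ?y = "code_inv x"
  let ?u = "concat (map \<omega> (prefix L ?y))"
  have y: "range ?y \<subseteq> {1..M}"
    using code_inv_in_X_code[OF x] by (rule range_X_code)
  then have z: "range (js \<frown> suffix L ?y) \<subseteq> {1..M}"
    using js by (auto simp: image_subset_iff)
  have u_len: "1 \<le> length ?u"
    using L length_concat_prefix(1)[OF y] by (rule order_trans)
  have "code_map \<omega> (js \<frown> suffix L ?y) = tl ?u \<frown> code_map \<omega> (suffix L ?y)"
    using code_map_conc[OF js, of "suffix L ?y"] y recode by (auto simp: image_subset_iff)
  also have "\<dots> = suffix 1 (?u \<frown> code_map \<omega> (suffix L ?y))"
    using u_len by (simp add: drop_Suc)
  also have "\<dots> = suffix 1 x"
    using code_map_prefix_suffix[OF y, of L] code_map_code_inv[OF x] by simp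
  finally have z_code: "code_map \<omega> (js \<frown> suffix L ?y) = suffix 1 x" .
  then have "js \<frown> suffix L ?y \<in> X_code"
    using in_X_code_if_code_map_in_XA[OF z] suffix_XA x by auto
  with z_code show ?thesis
    by (intro inv_into_f_eq inj_on_code_map)
qed

lemma continuous_orbit_map_code_inv: "continuous_orbit_map (XA N A) X_code code_inv"
proof -
  obtain L J where L: "1 \<le> L"
    and J: "\<And>is. length is = L \<Longrightarrow> set is \<subseteq> {1..M} \<Longrightarrow> adm N A (concat (map \<omega> is)) \<Longrightarrow>
      set (J is) \<subseteq> {1..M} \<and> tl (concat (map \<omega> is)) = concat (map \<omega> (J is))"
    using right_markov_recoding by blast
  define k where "k x = length (J (prefix L (code_inv x)))" for x
  have "suffix (k x) (code_inv (suffix 1 x)) = suffix L (code_inv x)" if x: "x \<in> XA N A" for x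
  proof -
    let ?y = "code_inv x"
    let ?u = "concat (map \<omega> (prefix L ?y))"
    have y: "range ?y \<subseteq> {1..M}"
      using code_inv_in_X_code[OF x] by (rule range_X_code)
    have "?u = prefix (length ?u) x"
      using code_map_prefix_suffix[OF y, of L] code_map_code_inv[OF x] by (metis prefix_conc_length)
    then have "adm N A ?u"
      using adm_prefix[OF x] by metis
    then have "set (J (prefix L ?y)) \<subseteq> {1..M}" "concat (map \<omega> (J (prefix L ?y))) = tl ?u"
      using J[of "prefix L ?y"] y by (auto simp: subsequence_def image_subset_iff)
    then show ?thesis
      using code_inv_suffix[OF x L] by (simp add: k_def)
  qed
  moreover have "continuous_on (XA N A) k"
    unfolding continuous_on_locally_constant_iff
  proof
    fix x assume "x \<in> XA N A"
    then obtain m where "\<forall>x'\<in>XA N A \<inter> cylinder x m. code_inv x' \<in> cylinder (code_inv x) L"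
      using continuous_on_code_inv unfolding continuous_on_sequence_valued_iff by blast
    then have "\<forall>x'\<in>XA N A \<inter> cylinder x m. k x' = k x"
      by (simp add: k_def cylinder_iff_prefix)
    then show "\<exists>m. \<forall>x'\<in>XA N A \<inter> cylinder x m. k x' = k x" ..
  qed
  ultimately show ?thesis
    using code_inv_in_X_code continuous_on_code_inv
    by (intro continuous_orbit_mapI[where k = k and l = "\<lambda>x. L"]) auto
qed

lemma cont_orbit_equivalent_code: "cont_orbit_equivalent X_code (XA N A)"
  unfolding cont_orbit_equivalent_def
  using homeomorphism_code_map continuous_orbit_map_code_map continuous_orbit_map_code_inv by blast

end

section \<open>Coded equivalence\<close>

lemma cont_orbit_equivalent_if_elem_coded_equiv:
  assumes "elem_coded_equiv N A M B"
  shows "cont_orbit_equivalent (XA N A) (XA M B)"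
proof -
  obtain M1 \<omega>1 M2 \<omega>2 where \<omega>1: "right_markov_code N A M1 \<omega>1" and \<omega>2: "right_markov_code M B M2 \<omega>2"
    and conj: "top_conjugate M1 (code_matrix A \<omega>1) M2 (code_matrix B \<omega>2)"
    using assms unfolding elem_coded_equiv_def by blast
  have "cont_orbit_equivalent (XA N A) (XA M1 (code_matrix A \<omega>1))"
    using right_markov_coding.cont_orbit_equivalent_code[OF right_markov_coding.intro[OF \<omega>1]]
    by (rule cont_orbit_equivalent_sym)
  moreover have "cont_orbit_equivalent (XA M1 (code_matrix A \<omega>1)) (XA M2 (code_matrix B \<omega>2))"
    using conj by (rule cont_orbit_equivalent_if_top_conjugate)
  ultimately have "cont_orbit_equivalent (XA N A) (XA M2 (code_matrix B \<omega>2))"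
    by (rule cont_orbit_equivalent_trans) (rule suffix_XA)+
  moreover have "cont_orbit_equivalent (XA M2 (code_matrix B \<omega>2)) (XA M B)"
    using right_markov_coding.cont_orbit_equivalent_code[OF right_markov_coding.intro[OF \<omega>2]] .
  ultimately show ?thesis
    by (rule cont_orbit_equivalent_trans) (rule suffix_XA)+
qed

lemma rtranclp_if_successively: "successively R xs \<Longrightarrow> xs \<noteq> [] \<Longrightarrow> R\<^sup>*\<^sup>* (hd xs) (last xs)"
  by (induction R xs rule: successively.induct) (auto intro: converse_rtranclp_into_rtranclp)

lemma rtranclp_elem_coded_equiv_if_coded_equiv:
  assumes "coded_equiv N A M B"
  shows "(\<lambda>p q. elem_coded_equiv (fst p) (snd p) (fst q) (snd q))\<^sup>*\<^sup>* (N, A) (M, B)"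
proof -
  obtain ch :: "(nat \<times> (nat \<Rightarrow> nat \<Rightarrow> bool)) list"
    where ch: "ch \<noteq> []" "hd ch = (N, A)" "last ch = (M, B)"
    and steps: "\<forall>k < length ch - 1. elem_coded_equiv (fst (ch ! k)) (snd (ch ! k))
      (fst (ch ! Suc k)) (snd (ch ! Suc k))"
    using assms unfolding coded_equiv_def by blast
  have "successively (\<lambda>p q. elem_coded_equiv (fst p) (snd p) (fst q) (snd q)) ch"
    unfolding successively_conv_nth using steps by (simp add: less_diff_conv)
  with ch show ?thesis
    using rtranclp_if_successively by fastforce
qed

lemma cont_orbit_equivalent_if_rtranclp_elem_coded_equiv:
  assumes "(\<lambda>p q. elem_coded_equiv (fst p) (snd p) (fst q) (snd q))\<^sup>*\<^sup>* p q"
  shows "cont_orbit_equivalent (XA (fst p) (snd p)) (XA (fst q) (snd q))"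
  using assms
proof (induction rule: rtranclp_induct)
  case base
  show ?case
    by (rule cont_orbit_equivalent_refl) (rule suffix_XA)
next
  case (step q r)
  from step.IH cont_orbit_equivalent_if_elem_coded_equiv[OF step.hyps(2)] show ?case
    by (rule cont_orbit_equivalent_trans) (rule suffix_XA)+
qed

theorem mainTheorem1:
  fixes N M :: nat and A B :: "nat \<Rightarrow> nat \<Rightarrow> bool"
  assumes "irreducible_mat N A" and "\<not> permutation_mat N A"
    and "irreducible_mat M B" and "\<not> permutation_mat M B"
    and "coded_equiv N A M B"
  shows "cont_orbit_equiv N A M B"
  using cont_orbit_equivalent_if_rtranclp_elem_coded_equiv[OF
      rtranclp_elem_coded_equiv_if_coded_equiv[OF assms(5)]]
  by (simp add: cont_orbit_equiv_iff)

end
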